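(* Let $q$ be a power of $2$ and let $m \ge 2$ be an integer with $\gcd(q-1, m(m-1)) = 1$. Then every $d \in \mathbb{F}_q$ is the discriminant of the same number of monic polynomials of degree $m$ in $\mathbb{F}_q[x]$ (namely $q^{m-1}$ of them), and every $d \in \mathbb{F}_q^\times$ is the discriminant of the same number of monic irreducible polynomials of degree $m$ in $\mathbb{F}_q[x]$.
   Context: For a nonconstant polynomial $f$ of degree $m \ge 2$ over a field $K$ with leading coefficient $a_m$, factored as $f = a_m\prod_{i=1}^m (x-\alpha_i)$ in a splitting field, $\operatorname{disc}(f) = a_m^{2m-2}\prod_{i<j}(\alpha_i-\alpha_j)^2$; for linear $f$, $\operatorname{disc}(f) = 1$. $\mathbb{F}_q$ denotes the finite field with $q$ elements. *)

theory Defs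
  imports "HOL-Algebra.Algebraic_Closure_Type"
begin

definition disc_roots :: "'a::field poly \<Rightarrow> 'a alg_closure list" where
  "disc_roots f = (SOME xs. map_poly to_ac f =
      smult (to_ac (lead_coeff f)) (\<Prod>x\<leftarrow>xs. [:-x, 1:]))"

definition disc :: "'a::field poly \<Rightarrow> 'a" where
  "disc f = (if degree f = 1 then 1 else
     (let m = degree f; \<alpha> = disc_roots f in
      of_ac (to_ac (lead_coeff f) ^ (2 * m - 2) *
        (\<Prod>i<length \<alpha>. \<Prod>j<length \<alpha>. if i < j then (\<alpha> ! i - \<alpha> ! j) ^ 2 else 1))))"

end

theory Submission
  imports Defs "HOL-Library.Cardinality"
begin

text \<open>
  Scaling the roots of a monic f of degree m by l \<noteq> 0, i.e. passing to l^m f(x/l), preserves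
  monicity, degree and irreducibility and multiplies the discriminant by l^(m(m-1)). Since
  gcd(q-1, m(m-1)) = 1, every nonzero d is such a power, so over all nonzero values the fibres of
  the discriminant have the same size, both among all monic polynomials and among the irreducible
  ones.

  In characteristic 2 every polynomial is uniquely A^2 + x B^2 and its derivative is B^2, so f has
  a repeated root exactly when A and B have a common root. Decomposing each pair (A, B) as
  D (P, Q) with D monic and P, Q coprime shows that exactly q^(m-1) monic f of degree m have
  discriminant 0; the remaining q^m - q^(m-1) are then split evenly among the q - 1 nonzero values.

  The discriminant is computed from the roots in the algebraic closure; it lies in the base field
  because the Frobenius z \<mapsto> z^q permutes these roots.
\<close>

section \<open>Homomorphisms acting on polynomials\<close>

locale idom_hom =
  fixes h :: "'a::idom \<Rightarrow> 'b::idom"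
  assumes hom_add: "h (x + y) = h x + h y"
    and hom_mult: "h (x * y) = h x * h y"
    and hom_one: "h 1 = 1"
begin

lemma hom_zero: "h 0 = 0"
  using hom_add[of 0 0] by (metis add_cancel_right_right)

lemma hom_uminus: "h (- x) = - h x"
  using hom_add[of x "- x"] by (simp add: hom_zero eq_neg_iff_add_eq_0 add.commute)

lemma hom_diff: "h (x - y) = h x - h y"
  using hom_add[of x "- y"] by (simp add: hom_uminus)

lemma hom_power: "h (x ^ n) = h x ^ n"
  by (induction n) (simp_all add: hom_one hom_mult)

lemma hom_of_nat: "h (of_nat n) = of_nat n"
  by (induction n) (simp_all add: hom_zero hom_one hom_add)

lemma hom_sum: "h (\<Sum>x\<in>A. f x) = (\<Sum>x\<in>A. h (f x))"
  by (induction A rule: infinite_finite_induct) (simp_all add: hom_zero hom_add)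

lemma hom_prod_list: "h (\<Prod>x\<leftarrow>xs. f x) = (\<Prod>x\<leftarrow>xs. h (f x))"
  by (induction xs) (simp_all add: hom_one hom_mult)

lemma map_poly_add: "map_poly h (p + q) = map_poly h p + map_poly h q"
  by (rule poly_eqI) (simp add: coeff_map_poly hom_zero hom_add)

lemma map_poly_mult: "map_poly h (p * q) = map_poly h p * map_poly h q"
  by (rule poly_eqI) (simp add: coeff_map_poly coeff_mult hom_zero hom_mult hom_sum)

lemma map_poly_power: "map_poly h (p ^ n) = map_poly h p ^ n"
  by (induction n) (simp_all add: hom_one map_poly_mult)

lemma map_poly_prod_list: "map_poly h (\<Prod>x\<leftarrow>xs. f x) = (\<Prod>x\<leftarrow>xs. map_poly h (f x))"
  by (induction xs) (simp_all add: hom_one map_poly_mult)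

lemma map_poly_pcompose: "map_poly h (pcompose p q) = pcompose (map_poly h p) (map_poly h q)"
  by (induction p)
    (simp_all add: pcompose_pCons map_poly_add map_poly_mult map_poly_pCons hom_zero)

lemma map_poly_pderiv: "map_poly h (pderiv p) = pderiv (map_poly h p)"
  by (rule poly_eqI)
    (simp add: coeff_map_poly coeff_pderiv hom_zero hom_mult hom_of_nat del: of_nat_Suc)

end

interpretation to_ac: idom_hom to_ac
  by standard simp_all

lemma frobenius_idom_hom:
  assumes "prime CHAR('a::idom)"
  shows "idom_hom (\<lambda>x::'a. x ^ (CHAR('a) ^ n))"
  by standard (simp_all add: freshmans_dream'[OF assms] power_mult_distrib)

section \<open>Finite fields\<close>

lemma of_nat_card_UNIV_eq_0: "of_nat (CARD('a::{finite,ring_1})) = (0::'a)"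
proof -
  have "(\<Sum>x\<in>UNIV. x + 1) = (\<Sum>x\<in>UNIV. x :: 'a)"
    by (rule sum.reindex_bij_witness[of _ "\<lambda>x. x - 1" "\<lambda>x. x + 1"]) auto
  then show ?thesis
    by (simp add: sum.distrib)
qed

lemma CHAR_eq_2_if_card_eq_power_2:
  assumes "CARD('a::{finite,field}) = 2 ^ k"
  shows "CHAR('a) = 2"
proof -
  have "(2::'a) ^ k = 0"
    using of_nat_card_UNIV_eq_0[where 'a='a] assms by simp
  then have "of_nat 2 = (0::'a)"
    by simp
  then have "CHAR('a) dvd 2"
    by (simp only: of_nat_eq_0_iff_char_dvd)
  moreover have "CHAR('a) \<noteq> 1"
    by simp
  ultimately show ?thesis
    using dvd_imp_le[of "CHAR('a)" 2] by (cases "CHAR('a)") auto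
qed

lemma prime_CHAR_finite_field: "prime CHAR('a::{finite,field})"
  by (simp add: prime_CHAR_semidom finite_imp_CHAR_pos)

lemma power_card_UNIV_minus_1_eq_1:
  fixes x :: "'a::{finite,field}"
  assumes "x \<noteq> 0"
  shows "x ^ (CARD('a) - 1) = 1"
proof -
  have "x ^ card (UNIV - {0::'a}) * \<Prod>(UNIV - {0}) = (\<Prod>y\<in>UNIV - {0}. x * y)"
    by (simp add: prod.distrib)
  also have "\<dots> = \<Prod>(UNIV - {0::'a})"
    by (rule prod.reindex_bij_witness[of _ "\<lambda>y. y / x" "\<lambda>y. x * y"]) (use assms in auto)
  finally show ?thesis
    by (simp add: card_Diff_singleton)
qed

lemma power_card_UNIV_eq_self:
  fixes x :: "'a::{finite,field}"
  shows "x ^ CARD('a) = x"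
proof -
  have "CARD('a) = Suc (CARD('a) - 1)"
    using finite_UNIV_card_ge_0[where 'a='a] by simp
  then show ?thesis
    by (cases "x = 0")
      (metis power_0_Suc, metis power_Suc power_card_UNIV_minus_1_eq_1 mult_1_right)
qed

lemma card_UNIV_field_ge_2: "CARD('a::{finite,field}) \<ge> 2"
  using card_mono[of UNIV "{0::'a, 1}"] by simp

lemma ex_power_eq_if_coprime:
  fixes d :: "'a::{finite,field}"
  assumes "coprime (CARD('a) - 1) e" and "d \<noteq> 0"
  shows "\<exists>l. l \<noteq> 0 \<and> l ^ e = d"
proof -
  let ?q = "CARD('a)"
  obtain x y where "(?q - 1) * x = e * y + 1"
    using bezout_nat[of "?q - 1" e] assms(1) card_UNIV_field_ge_2[where 'a='a]
    by (auto simp: coprime_iff_gcd_eq_1)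
  moreover have "d ^ (?q - 1) = 1"
    using assms(2) by (rule power_card_UNIV_minus_1_eq_1)
  ultimately have "d ^ (y * e) * d = 1"
    by (metis power_add power_mult power_one power_one_right mult.commute)
  then have "inverse (d ^ y) ^ e = d"
    using assms(2) by (simp add: power_inverse power_mult[symmetric] field_simps)
  then show ?thesis
    using assms(2) by (intro exI[of _ "inverse (d ^ y)"]) simp
qed

section \<open>Counting polynomials of bounded degree\<close>

definition polys_deg_less :: "nat \<Rightarrow> 'a::zero poly set" where
  "polys_deg_less n = {p. \<forall>i\<ge>n. coeff p i = 0}"

definition monic_polys :: "nat \<Rightarrow> 'a::zero_neq_one poly set" where
  "monic_polys k = {p. lead_coeff p = 1 \<and> degree p = k}"

lemma polys_deg_less_iff: "p \<in> polys_deg_less n \<longleftrightarrow> p = 0 \<or> degree p < n"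
proof
  assume "p \<in> polys_deg_less n"
  then have "coeff p (degree p) = 0" if "n \<le> degree p"
    using that by (simp add: polys_deg_less_def)
  then show "p = 0 \<or> degree p < n"
    by (meson leading_coeff_0_iff not_le)
qed (auto simp: polys_deg_less_def coeff_eq_0)

lemma pCons_mem_polys_deg_less_Suc [simp]:
  "pCons a p \<in> polys_deg_less (Suc n) \<longleftrightarrow> p \<in> polys_deg_less n"
  by (auto simp: polys_deg_less_def coeff_pCons split: nat.splits)

lemma polys_deg_less_Suc:
  "polys_deg_less (Suc n) = case_prod pCons ` (UNIV \<times> polys_deg_less n)"
proof -
  have "p \<in> case_prod pCons ` (UNIV \<times> polys_deg_less n)" if "p \<in> polys_deg_less (Suc n)" for p
    using that by (cases p rule: pCons_cases) auto
  then show ?thesis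
    by auto
qed

lemma card_polys_deg_less:
  "finite (polys_deg_less n :: 'a::{finite,zero} poly set)"
  "card (polys_deg_less n :: 'a poly set) = CARD('a) ^ n"
proof (induction n)
  case 0
  have "polys_deg_less 0 = {0 :: 'a poly}"
    by (auto simp: polys_deg_less_iff)
  then show "finite (polys_deg_less 0 :: 'a poly set)"
    "card (polys_deg_less 0 :: 'a poly set) = CARD('a) ^ 0"
    by simp_all
next
  case (Suc n)
  have inj: "inj_on (case_prod pCons) (UNIV \<times> (polys_deg_less n :: 'a poly set))"
    by (auto simp: inj_on_def)
  show "finite (polys_deg_less (Suc n) :: 'a poly set)"
    unfolding polys_deg_less_Suc using Suc.IH(1) by simp
  have "card (polys_deg_less (Suc n) :: 'a poly set) =
      card ((UNIV :: 'a set) \<times> (polys_deg_less n :: 'a poly set))"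
    unfolding polys_deg_less_Suc using inj by (rule card_image)
  also have "\<dots> = CARD('a) ^ Suc n"
    using Suc.IH(2) by (simp add: card_cartesian_product)
  finally show "card (polys_deg_less (Suc n) :: 'a poly set) = CARD('a) ^ Suc n" .
qed

lemma monic_polys_nonzero: "p \<in> monic_polys k \<Longrightarrow> p \<noteq> 0"
  by (auto simp: monic_polys_def)

lemma monic_polys_iff_coeff: "p \<in> monic_polys k \<longleftrightarrow> coeff p k = 1 \<and> (\<forall>i>k. coeff p i = 0)"
proof
  assume "p \<in> monic_polys k"
  then have "lead_coeff p = 1" "degree p = k"
    unfolding monic_polys_def by blast+
  then show "coeff p k = 1 \<and> (\<forall>i>k. coeff p i = 0)"
    using coeff_eq_0[of p] by auto
next
  assume p: "coeff p k = 1 \<and> (\<forall>i>k. coeff p i = 0)"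
  then have "degree p \<le> k"
    by (intro degree_le) simp
  moreover have "k \<le> degree p"
    using p by (intro le_degree) simp
  ultimately show "p \<in> monic_polys k"
    using p by (simp add: monic_polys_def)
qed

lemma monic_polys_eq_image:
  "(monic_polys k :: 'a::ring_1 poly set) = (\<lambda>p. monom 1 k + p) ` polys_deg_less k"
proof (intro equalityI subsetI)
  fix p :: "'a poly"
  assume "p \<in> monic_polys k"
  then have "p - monom 1 k \<in> polys_deg_less k"
    by (auto simp: monic_polys_iff_coeff polys_deg_less_def coeff_monom le_less)
  then show "p \<in> (\<lambda>p. monom 1 k + p) ` polys_deg_less k"
    by (rule image_eqI[rotated]) simp
next
  fix p :: "'a poly"
  assume "p \<in> (\<lambda>p. monom 1 k + p) ` polys_deg_less k"
  then show "p \<in> monic_polys k"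
    by (auto simp: monic_polys_iff_coeff polys_deg_less_def coeff_monom)
qed

lemma card_monic_polys:
  "finite (monic_polys k :: 'a::{finite,ring_1} poly set)"
  "card (monic_polys k :: 'a poly set) = CARD('a) ^ k"
proof -
  have "inj_on (\<lambda>p. monom 1 k + p) (polys_deg_less k :: 'a poly set)"
    by (rule inj_onI) simp
  then show "finite (monic_polys k :: 'a poly set)"
    "card (monic_polys k :: 'a poly set) = CARD('a) ^ k"
    unfolding monic_polys_eq_image using card_polys_deg_less[where 'a='a]
    by (simp_all add: card_image)
qed

lemma add_mem_monic_polys:
  "p \<in> monic_polys n \<Longrightarrow> q \<in> polys_deg_less n \<Longrightarrow> p + q \<in> monic_polys n"
  by (simp add: monic_polys_iff_coeff polys_deg_less_def)

lemma power2_mem_monic_polys: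
  fixes p :: "'a::idom poly"
  assumes "p \<in> monic_polys n"
  shows "p ^ 2 \<in> monic_polys (2 * n)"
proof -
  from assms have p: "lead_coeff p = 1" "degree p = n"
    unfolding monic_polys_def by blast+
  have "lead_coeff (p ^ 2) = lead_coeff p ^ 2"
    by (rule lead_coeff_power)
  with p(1) have "lead_coeff (p ^ 2) = 1"
    by simp
  moreover have "degree (p ^ 2) = 2 * n"
    using p monic_polys_nonzero[OF assms] by (simp add: degree_power_eq)
  ultimately show ?thesis
    unfolding monic_polys_def by blast
qed

section \<open>Coprime pairs of polynomials\<close>

lemma monic_dvd_antisym:
  fixes p q :: "'a::field poly"
  assumes "lead_coeff p = 1" "lead_coeff q = 1" "p dvd q" "q dvd p"
  shows "p = q"
proof -
  obtain r where r: "q = p * r"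
    using assms(3) by (elim dvdE)
  have "p \<noteq> 0" "q \<noteq> 0"
    using assms(1,2) by auto
  moreover have "degree p \<le> degree q" "degree q \<le> degree p"
    using assms(3,4) \<open>p \<noteq> 0\<close> \<open>q \<noteq> 0\<close> by (simp_all add: dvd_imp_degree_le)
  ultimately have "r \<noteq> 0" "degree p = degree q"
    using r by auto
  then have "degree r = 0"
    using r \<open>p \<noteq> 0\<close> by (simp add: degree_mult_eq)
  moreover have "lead_coeff r = 1"
    using r assms(1,2) by (simp add: lead_coeff_mult)
  ultimately have "r = 1"
    by (elim degree_eq_zeroE) (simp add: one_pCons)
  then show ?thesis
    using r by simp
qed

lemma ex_monic_bezout_gcd:
  fixes A B :: "'a::field poly"
  assumes "A \<noteq> 0 \<or> B \<noteq> 0"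
  shows "\<exists>D u v. lead_coeff D = 1 \<and> D dvd A \<and> D dvd B \<and> D = u * A + v * B"
  using assms
proof (induction "if B = 0 then 0 else Suc (degree B)" arbitrary: A B rule: less_induct)
  case less
  show ?case
  proof (cases "B = 0")
    case True
    with less.prems have "A \<noteq> 0"
      by simp
    then have "lead_coeff (smult (inverse (lead_coeff A)) A) = 1"
      by simp
    with True show ?thesis
      by (intro exI[of _ "smult (inverse (lead_coeff A)) A"] exI[of _ "[:inverse (lead_coeff A):]"]
          exI[of _ 0]) (simp add: smult_dvd_iff)
  next
    case False
    have "(if A mod B = 0 then 0 else Suc (degree (A mod B))) <
        (if B = 0 then 0 else Suc (degree B))"
      using degree_mod_less'[of B A] False by auto
    then obtain D u v
      where D: "lead_coeff D = 1" "D dvd B" "D dvd A mod B" "D = u * B + v * (A mod B)"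
      using less.hyps[of "A mod B" B] False by blast
    have "D dvd A div B * B + A mod B"
      using D(2,3) by (intro dvd_add dvd_mult)
    then have "D dvd A"
      by simp
    moreover have "D = v * A + (u - v * (A div B)) * B"
      unfolding D(4) minus_div_mult_eq_mod[of A B, symmetric] by (simp add: algebra_simps)
    ultimately show ?thesis
      using D(1,2) by blast
  qed
qed

lemma coprime_imp_bezout:
  fixes A B :: "'a::field poly"
  assumes "coprime A B" "A \<noteq> 0 \<or> B \<noteq> 0"
  shows "\<exists>u v. u * A + v * B = 1"
proof -
  obtain D u v where D: "lead_coeff D = 1" "D dvd A" "D dvd B" "D = u * A + v * B"
    using ex_monic_bezout_gcd[OF assms(2)] by blast
  then have "is_unit D"
    using assms(1) coprime_common_divisor by blast
  then have "D = 1"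
    using monic_dvd_antisym[of D 1] D(1) by simp
  with D(4) show ?thesis
    by auto
qed

lemma monic_gcd_decomposition:
  fixes A B :: "'a::field poly"
  assumes "A \<noteq> 0"
  obtains D P Q where "lead_coeff D = 1" "A = D * P" "B = D * Q" "coprime P Q"
proof -
  obtain D u v where D: "lead_coeff D = 1" "D dvd A" "D dvd B" "D = u * A + v * B"
    using ex_monic_bezout_gcd assms by blast
  obtain P Q where PQ: "A = D * P" "B = D * Q"
    using D(2,3) by (elim dvdE)
  have "D * (u * P + v * Q) = D * 1"
    using D(4) PQ by (simp add: algebra_simps)
  moreover have "D \<noteq> 0"
    using D(1) by auto
  ultimately have bezout: "u * P + v * Q = 1"
    by simp
  have "coprime P Q"
  proof (rule coprimeI)
    fix c
    assume "c dvd P" "c dvd Q"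
    then have "c dvd u * P + v * Q"
      by (intro dvd_add dvd_mult)
    then show "is_unit c"
      by (simp add: bezout)
  qed
  with D(1) PQ that show ?thesis
    by blast
qed

lemma monic_gcd_decomposition_unique:
  fixes D D' P Q P' Q' :: "'a::field poly"
  assumes "lead_coeff D = 1" "lead_coeff D' = 1" "coprime P Q" "coprime P' Q'" "P \<noteq> 0" "P' \<noteq> 0"
    and "D * P = D' * P'" "D * Q = D' * Q'"
  shows "D = D'"
proof -
  have "D' dvd D" if cop: "coprime P Q" "P \<noteq> 0" and eq: "D * P = D' * P'" "D * Q = D' * Q'"
    for D D' P Q P' Q' :: "'a poly"
  proof -
    obtain u v where "u * P + v * Q = 1"
      using coprime_imp_bezout cop by blast
    then have "D = u * (D * P) + v * (D * Q)"
      by (metis distrib_left mult.left_commute mult_1_right)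
    also have "\<dots> = u * (D' * P') + v * (D' * Q')"
      by (simp only: eq)
    finally show ?thesis
      by (metis dvd_add dvd_mult dvd_triv_left)
  qed
  from this[OF assms(3,5,7,8)] this[OF assms(4,6) assms(7,8)[symmetric]] show ?thesis
    by (intro monic_dvd_antisym assms(1,2))
qed

lemma mult_mem_polys_deg_less_iff:
  fixes D Q :: "'a::idom poly"
  assumes "D \<noteq> 0"
  shows "D * Q \<in> polys_deg_less (degree D + n) \<longleftrightarrow> Q \<in> polys_deg_less n"
  using assms by (cases "Q = 0") (simp_all add: polys_deg_less_iff degree_mult_eq)

lemma mult_mem_monic_polys_iff:
  fixes D P :: "'a::idom poly"
  assumes "lead_coeff D = 1"
  shows "D * P \<in> monic_polys (degree D + i) \<longleftrightarrow> P \<in> monic_polys i"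
proof -
  have "D \<noteq> 0"
    using assms by auto
  then show ?thesis
    using assms by (cases "P = 0") (auto simp: monic_polys_def degree_mult_eq coeff_mult_degree_sum)
qed

text \<open>For c \<in> {0, 1} these pairs parametrise, in characteristic 2, the monic polynomials of
  degree 2k + c (see \<open>even_odd_join_image\<close>).\<close>

definition poly_pairs :: "nat \<Rightarrow> nat \<Rightarrow> ('a::field poly \<times> 'a poly) set" where
  "poly_pairs c k = monic_polys k \<times> polys_deg_less (k + c)"

definition coprime_poly_pairs :: "nat \<Rightarrow> nat \<Rightarrow> ('a::field poly \<times> 'a poly) set" where
  "coprime_poly_pairs c k = {(A, B) \<in> poly_pairs c k. coprime A B}"

lemma card_poly_pairs:
  "finite (poly_pairs c k :: ('a::{finite,field} poly \<times> 'a poly) set)"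
  "card (poly_pairs c k :: ('a poly \<times> 'a poly) set) = CARD('a) ^ (2 * k + c)"
  using card_monic_polys[where 'a='a] card_polys_deg_less[where 'a='a]
  by (simp_all add: poly_pairs_def card_cartesian_product power_add[symmetric] mult_2 add.assoc)

definition gcd_decompositions :: "nat \<Rightarrow> nat \<Rightarrow> (nat \<times> 'a::field poly \<times> 'a poly \<times> 'a poly) set"
  where "gcd_decompositions c k = (SIGMA j:{..k}. monic_polys j \<times> coprime_poly_pairs c (k - j))"

lemma mem_gcd_decompositions_iff:
  "(j, D, P, Q) \<in> gcd_decompositions c k \<longleftrightarrow> j \<le> k \<and> lead_coeff D = 1 \<and> degree D = j \<and>
    P \<in> monic_polys (k - j) \<and> Q \<in> polys_deg_less (k - j + c) \<and> coprime P Q"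
  by (auto simp: gcd_decompositions_def monic_polys_def coprime_poly_pairs_def poly_pairs_def)

lemma inj_on_gcd_decompositions:
  "inj_on (\<lambda>(j, D, P, Q). (D * P, D * Q)) (gcd_decompositions c k)"
proof (rule inj_onI)
  fix x y :: "nat \<times> 'a poly \<times> 'a poly \<times> 'a poly"
  assume x: "x \<in> gcd_decompositions c k" and y: "y \<in> gcd_decompositions c k"
    and eq: "(\<lambda>(j, D, P, Q). (D * P, D * Q)) x = (\<lambda>(j, D, P, Q). (D * P, D * Q)) y"
  obtain j D P Q j' D' P' Q' where xy: "x = (j, D, P, Q)" "y = (j', D', P', Q')"
    by (metis prod_cases4)
  have D: "lead_coeff D = 1" "degree D = j" "coprime P Q" "P \<in> monic_polys (k - j)"
    and D': "lead_coeff D' = 1" "degree D' = j'" "coprime P' Q'" "P' \<in> monic_polys (k - j')"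
    using x y unfolding xy mem_gcd_decompositions_iff by blast+
  have "D * P = D' * P'" "D * Q = D' * Q'"
    using eq by (simp_all add: xy)
  moreover from this have "D = D'"
    using D D' monic_polys_nonzero by (blast intro: monic_gcd_decomposition_unique)
  moreover have "D \<noteq> 0"
    using D(1) by auto
  ultimately show "x = y"
    using D(2) D'(2) by (simp add: xy)
qed

lemma mult_mem_poly_pairs:
  assumes "(j, D, P, Q) \<in> gcd_decompositions c k"
  shows "(D * P, D * Q) \<in> poly_pairs c k"
proof -
  from assms have S: "j \<le> k" "lead_coeff D = 1" "degree D = j" "P \<in> monic_polys (k - j)"
    "Q \<in> polys_deg_less (k - j + c)"
    unfolding mem_gcd_decompositions_iff by blast+
  then have "D \<noteq> 0"
    by auto
  have "D * P \<in> monic_polys (degree D + (k - j))"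
    using mult_mem_monic_polys_iff[of D P "k - j"] S by blast
  moreover have "D * Q \<in> polys_deg_less (degree D + (k - j + c))"
    using mult_mem_polys_deg_less_iff[OF \<open>D \<noteq> 0\<close>, of Q "k - j + c"] S by blast
  moreover have "degree D + (k - j) = k" "degree D + (k - j + c) = k + c"
    using S by simp_all
  ultimately show ?thesis
    by (simp add: poly_pairs_def)
qed

lemma poly_pairs_gcd_decomposition:
  fixes A B :: "'a::field poly"
  assumes "(A, B) \<in> poly_pairs c k"
  obtains D P Q where "(degree D, D, P, Q) \<in> gcd_decompositions c k" "A = D * P" "B = D * Q"
proof -
  from assms have A: "A \<in> monic_polys k" and B: "B \<in> polys_deg_less (k + c)"
    by (simp_all add: poly_pairs_def)
  from A have "A \<noteq> 0"
    by (rule monic_polys_nonzero)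
  then obtain D P Q where D: "lead_coeff D = 1" "A = D * P" "B = D * Q" "coprime P Q"
    by (rule monic_gcd_decomposition)
  have "P \<noteq> 0" "D \<noteq> 0"
    using \<open>A \<noteq> 0\<close> D(2) by auto
  then have j: "degree D \<le> k"
    using A D(2) by (auto simp: monic_polys_def degree_mult_eq)
  have "D * P \<in> monic_polys (degree D + (k - degree D))"
    "D * Q \<in> polys_deg_less (degree D + (k - degree D + c))"
    using A B j D(2,3) by simp_all
  then have "P \<in> monic_polys (k - degree D)" "Q \<in> polys_deg_less (k - degree D + c)"
    using mult_mem_monic_polys_iff[OF D(1)] mult_mem_polys_deg_less_iff[OF \<open>D \<noteq> 0\<close>] by blast+
  with D(1,4) j have "(degree D, D, P, Q) \<in> gcd_decompositions c k"
    unfolding mem_gcd_decompositions_iff by blast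
  with D(2,3) that show ?thesis
    by blast
qed

lemma image_gcd_decompositions:
  "(\<lambda>(j, D, P, Q). (D * P, D * Q)) ` gcd_decompositions c k = poly_pairs c k"
proof (intro equalityI subsetI)
  fix y :: "'a poly \<times> 'a poly"
  assume "y \<in> (\<lambda>(j, D, P, Q). (D * P, D * Q)) ` gcd_decompositions c k"
  then show "y \<in> poly_pairs c k"
    by (auto intro: mult_mem_poly_pairs)
next
  fix y :: "'a poly \<times> 'a poly"
  assume "y \<in> poly_pairs c k"
  moreover obtain A B where "y = (A, B)"
    by fastforce
  ultimately obtain D P Q where "(degree D, D, P, Q) \<in> gcd_decompositions c k" "y = (D * P, D * Q)"
    by (metis poly_pairs_gcd_decomposition)
  then show "y \<in> (\<lambda>(j, D, P, Q). (D * P, D * Q)) ` gcd_decompositions c k"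
    by force
qed

lemma sum_card_coprime_poly_pairs:
  "(\<Sum>j\<le>k. CARD('a) ^ j *
      card (coprime_poly_pairs c (k - j) :: ('a::{finite,field} poly \<times> 'a poly) set)) =
    CARD('a) ^ (2 * k + c)"
proof -
  have fin: "finite (coprime_poly_pairs c i :: ('a poly \<times> 'a poly) set)" for i
    using card_poly_pairs(1)[of c i]
    by (rule finite_subset[rotated]) (auto simp: coprime_poly_pairs_def)
  have "CARD('a) ^ (2 * k + c) = card (poly_pairs c k :: ('a poly \<times> 'a poly) set)"
    by (simp add: card_poly_pairs)
  also have "\<dots> = card (gcd_decompositions c k :: (nat \<times> 'a poly \<times> 'a poly \<times> 'a poly) set)"
    by (simp flip: image_gcd_decompositions add: card_image inj_on_gcd_decompositions)
  also have "\<dots> = (\<Sum>j\<le>k. CARD('a) ^ j *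
      card (coprime_poly_pairs c (k - j) :: ('a poly \<times> 'a poly) set))"
    unfolding gcd_decompositions_def
    by (subst card_SigmaI) (simp_all add: card_cartesian_product card_monic_polys fin)
  finally show ?thesis ..
qed

lemma card_not_coprime_poly_pairs:
  "card (poly_pairs c (Suc k) - coprime_poly_pairs c (Suc k) ::
      ('a::{finite,field} poly \<times> 'a poly) set) = CARD('a) ^ (2 * k + c + 1)"
proof -
  let ?q = "CARD('a)"
  let ?a = "\<lambda>i. card (coprime_poly_pairs c i :: ('a poly \<times> 'a poly) set)"
  have "?q ^ (2 * Suc k + c) = (\<Sum>j\<le>Suc k. ?q ^ j * ?a (Suc k - j))"
    by (rule sum_card_coprime_poly_pairs[symmetric])
  also have "\<dots> = ?a (Suc k) + ?q * (\<Sum>j\<le>k. ?q ^ j * ?a (k - j))"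
    by (simp add: sum.atMost_Suc_shift sum_distrib_left mult.assoc del: sum.atMost_Suc)
  also have "(\<Sum>j\<le>k. ?q ^ j * ?a (k - j)) = ?q ^ (2 * k + c)"
    by (rule sum_card_coprime_poly_pairs)
  finally have "?a (Suc k) = ?q ^ (2 * Suc k + c) - ?q ^ (2 * k + c + 1)"
    by simp
  moreover have "coprime_poly_pairs c (Suc k) \<subseteq> (poly_pairs c (Suc k) :: ('a poly \<times> 'a poly) set)"
    by (auto simp: coprime_poly_pairs_def)
  ultimately show ?thesis
    using card_poly_pairs[of c "Suc k", where 'a='a]
    by (simp add: card_Diff_subset finite_subset)
qed

section \<open>Discriminants of lists of roots\<close>

lemma monic_prod_linear:
  fixes xs :: "'a::idom list"
  shows "lead_coeff (\<Prod>x\<leftarrow>xs. [:-x, 1:]) = 1" "degree (\<Prod>x\<leftarrow>xs. [:-x, 1:]) = length xs"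
proof (induction xs)
  case (Cons x xs)
  then have "(\<Prod>x\<leftarrow>xs. [:-x, 1:]) \<noteq> 0"
    by auto
  with Cons show "lead_coeff (\<Prod>x\<leftarrow>x # xs. [:-x, 1:]) = 1"
    "degree (\<Prod>x\<leftarrow>x # xs. [:-x, 1:]) = length (x # xs)"
    by (simp_all only: list.map prod_list.Cons lead_coeff_mult)
      (simp_all add: degree_mult_eq del: mult_pCons_left)
qed simp_all

lemma proots_prod_linear: "proots (\<Prod>x\<leftarrow>xs. [:-x, 1::'a::idom:]) = mset xs"
proof (induction xs)
  case (Cons x xs)
  have "proots [:-x, 1:] = {#x#}"
    using proots_linear_factor[of "-x"] by simp
  moreover have "(\<Prod>x\<leftarrow>xs. [:-x, 1::'a:]) \<noteq> 0"
    using monic_prod_linear(1)[of xs] by auto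
  ultimately show ?case
    using Cons by (simp add: proots_mult del: mult_pCons_left)
qed simp

lemma poly_prod_linear: "poly (\<Prod>x\<leftarrow>xs. [:-x, 1:]) a = (\<Prod>x\<leftarrow>xs. a - x :: 'a::comm_ring_1)"
  by (induction xs) (simp_all add: algebra_simps)

lemma prod_list_remove1:
  fixes f :: "'a \<Rightarrow> 'b::comm_monoid_mult"
  assumes "a \<in> set xs"
  shows "(\<Prod>x\<leftarrow>xs. f x) = f a * (\<Prod>x\<leftarrow>remove1 a xs. f x)"
  using assms by (induction xs) (auto simp: ac_simps)

lemma poly_pderiv_prod_linear:
  fixes xs :: "'a::idom list"
  assumes "a \<in> set xs"
  shows "poly (pderiv (\<Prod>x\<leftarrow>xs. [:-x, 1:])) a = (\<Prod>x\<leftarrow>remove1 a xs. a - x)"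
proof -
  have "(\<Prod>x\<leftarrow>xs. [:-x, 1:]) = [:-a, 1:] * (\<Prod>x\<leftarrow>remove1 a xs. [:-x, 1:])"
    using assms by (rule prod_list_remove1)
  then show ?thesis
    by (simp add: pderiv_mult pderiv_pCons poly_prod_linear del: mult_pCons_left)
qed

lemma not_distinct_iff_mem_remove1: "\<not> distinct xs \<longleftrightarrow> (\<exists>a. a \<in> set (remove1 a xs))"
proof (induction xs)
  case (Cons x xs)
  show ?case
  proof (cases "x \<in> set xs")
    case False
    then have "a \<in> set (remove1 a (x # xs)) \<longleftrightarrow> a \<in> set (remove1 a xs)" for a
      by (cases "a = x") simp_all
    with Cons.IH False show ?thesis
      by simp
  qed auto
qed simp

lemma not_distinct_iff_common_root_pderiv:
  fixes xs :: "'a::idom list"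
  defines "p \<equiv> \<Prod>x\<leftarrow>xs. [:-x, 1:]"
  shows "\<not> distinct xs \<longleftrightarrow> (\<exists>a. poly p a = 0 \<and> poly (pderiv p) a = 0)"
proof -
  have "poly p a = 0 \<longleftrightarrow> a \<in> set xs" for a
    by (auto simp: p_def poly_prod_linear prod_list_zero_iff)
  moreover have "a \<in> set (remove1 a xs) \<longleftrightarrow> a \<in> set xs \<and> poly (pderiv p) a = 0" for a
    by (cases "a \<in> set xs") (auto simp: p_def poly_pderiv_prod_linear prod_list_zero_iff)
  ultimately show ?thesis
    unfolding not_distinct_iff_mem_remove1 by blast
qed

fun root_disc :: "'a::comm_ring_1 list \<Rightarrow> 'a" where
  "root_disc [] = 1"
| "root_disc (x # xs) = (\<Prod>y\<leftarrow>xs. (x - y) ^ 2) * root_disc xs"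

lemma prod_list_map_conv_prod_nth: "(\<Prod>x\<leftarrow>xs. f x) = (\<Prod>i<length xs. f (xs ! i))"
  by (induction xs) (simp_all add: prod.lessThan_Suc_shift del: prod.lessThan_Suc)

lemma prod_nth_eq_root_disc:
  "(\<Prod>i<length xs. \<Prod>j<length xs. if i < j then (xs ! i - xs ! j) ^ 2 else 1) = root_disc xs"
proof (induction xs)
  case (Cons x xs)
  let ?g = "\<lambda>i j. if i < j then ((x # xs) ! i - (x # xs) ! j) ^ 2 else 1"
  have "(\<Prod>j<Suc (length xs). ?g 0 j) = (\<Prod>y\<leftarrow>xs. (x - y) ^ 2)"
    by (simp add: prod.lessThan_Suc_shift prod_list_map_conv_prod_nth del: prod.lessThan_Suc)
  moreover have "(\<Prod>j<Suc (length xs). ?g (Suc i) j) =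
      (\<Prod>j<length xs. if i < j then (xs ! i - xs ! j) ^ 2 else 1)" for i
    by (simp add: prod.lessThan_Suc_shift del: prod.lessThan_Suc cong: if_cong)
  ultimately show ?case
    using Cons.IH by (simp add: prod.lessThan_Suc_shift del: prod.lessThan_Suc)
qed simp

lemma root_disc_remove1:
  assumes "a \<in> set xs"
  shows "root_disc xs = (\<Prod>y\<leftarrow>remove1 a xs. (a - y) ^ 2) * root_disc (remove1 a xs)"
  using assms
proof (induction xs)
  case (Cons x xs)
  show ?case
  proof (cases "x = a")
    case False
    with Cons.prems have "a \<in> set xs"
      by simp
    then have "(\<Prod>y\<leftarrow>xs. (x - y) ^ 2) = (x - a) ^ 2 * (\<Prod>y\<leftarrow>remove1 a xs. (x - y) ^ 2)"
      by (rule prod_list_remove1)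
    moreover have "(x - a) ^ 2 = (a - x) ^ 2"
      by (rule power2_commute)
    ultimately show ?thesis
      using Cons.IH[OF \<open>a \<in> set xs\<close>] False by (simp add: mult_ac)
  qed simp
qed simp

lemma root_disc_mset_eq:
  assumes "mset xs = mset ys"
  shows "root_disc xs = root_disc ys"
  using assms
proof (induction xs arbitrary: ys)
  case (Cons x xs)
  then have "x \<in> set ys"
    by (metis list.set_intros(1) set_mset_mset)
  have "mset (remove1 x ys) = mset (x # xs) - {#x#}"
    using Cons.prems by simp
  then have mset_xs: "mset xs = mset (remove1 x ys)"
    by simp
  have "(\<Prod>y\<leftarrow>xs. (x - y) ^ 2) = (\<Prod>y\<leftarrow>remove1 x ys. (x - y) ^ 2)"
    using mset_xs by (simp flip: prod_mset_prod_list)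
  then show ?case
    using root_disc_remove1[OF \<open>x \<in> set ys\<close>] Cons.IH[OF mset_xs] by simp
qed simp

lemma root_disc_eq_0_iff: "root_disc xs = 0 \<longleftrightarrow> \<not> distinct (xs :: 'a::idom list)"
  by (induction xs) (auto simp: prod_list_zero_iff)

lemma (in idom_hom) hom_root_disc: "h (root_disc xs) = root_disc (map h xs)"
  by (induction xs) (simp_all add: hom_one hom_mult hom_prod_list hom_power hom_diff o_def)

lemma root_disc_map_mult:
  "root_disc (map ((*) c) xs) = c ^ (length xs * (length xs - 1)) * root_disc xs"
proof (induction xs)
  case (Cons x xs)
  let ?n = "length xs" and ?P = "\<Prod>y\<leftarrow>xs. (x - y) ^ 2"
  have "(\<Prod>y\<leftarrow>map ((*) c) xs. (c * x - y) ^ 2) = (\<Prod>y\<leftarrow>xs. c ^ 2 * (x - y) ^ 2)"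
    by (simp add: o_def right_diff_distrib[symmetric] power_mult_distrib)
  also have "\<dots> = c ^ (2 * ?n) * ?P"
    by (induction xs) (simp_all add: power_add power2_eq_square mult_ac)
  finally have "root_disc (map ((*) c) (x # xs)) =
      c ^ (2 * ?n) * ?P * (c ^ (?n * (?n - 1)) * root_disc xs)"
    using Cons.IH by simp
  also have "\<dots> = c ^ (2 * ?n + ?n * (?n - 1)) * (?P * root_disc xs)"
    by (simp add: power_add mult_ac)
  also have "2 * ?n + ?n * (?n - 1) = length (x # xs) * (length (x # xs) - 1)"
    by (cases ?n) simp_all
  finally show ?case
    by simp
qed simp

section \<open>Roots in the algebraic closure\<close>

lemma degree_map_poly_to_ac [simp]: "degree (map_poly to_ac p) = degree p"
  by (rule degree_map_poly) simp

lemma lead_coeff_map_poly_to_ac [simp]: "lead_coeff (map_poly to_ac p) = to_ac (lead_coeff p)"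
  by (simp add: coeff_map_poly)

lemma map_poly_to_ac_eq_prod_disc_roots:
  fixes f :: "'a::field poly"
  assumes "lead_coeff f = 1"
  shows "map_poly to_ac f = (\<Prod>x\<leftarrow>disc_roots f. [:-x, 1:])"
proof -
  have "map_poly to_ac f \<noteq> 0"
    using assms by (auto simp: map_poly_eq_0_iff)
  then obtain A where "map_poly to_ac f = smult (lead_coeff (map_poly to_ac f)) (\<Prod>x\<in>#A. [:-x, 1:])"
    using alg_closed_imp_factorization by blast
  moreover obtain xs where "mset xs = A"
    using ex_mset by blast
  ultimately have "map_poly to_ac f = smult (to_ac (lead_coeff f)) (\<Prod>x\<leftarrow>xs. [:-x, 1:])"
    by (simp add: coeff_map_poly flip: prod_mset_prod_list)
  then have "map_poly to_ac f = smult (to_ac (lead_coeff f)) (\<Prod>x\<leftarrow>disc_roots f. [:-x, 1:])"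
    unfolding disc_roots_def by (rule someI)
  with assms show ?thesis
    by simp
qed

lemma length_disc_roots:
  fixes f :: "'a::field poly"
  assumes "lead_coeff f = 1"
  shows "length (disc_roots f) = degree f"
  using monic_prod_linear(2)[of "disc_roots f"] map_poly_to_ac_eq_prod_disc_roots[OF assms]
  by (metis degree_map_poly_to_ac)

lemma disc_eq_of_ac_root_disc:
  fixes f :: "'a::field poly"
  assumes "lead_coeff f = 1" "degree f \<noteq> 1"
  shows "disc f = of_ac (root_disc (disc_roots f))"
  using assms by (simp add: disc_def prod_nth_eq_root_disc)

lemma fixed_by_power_card_in_range_to_ac:
  fixes z :: "'a::{finite,field} alg_closure"
  assumes "z ^ CARD('a) = z"
  shows "z \<in> range to_ac"
proof -
  define P where "P = monom 1 CARD('a) - [:0, 1 :: 'a alg_closure:]"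
  have "coeff P CARD('a) = 1"
    using card_UNIV_field_ge_2[where 'a='a] by (simp add: P_def coeff_pCons split: nat.splits)
  then have "P \<noteq> 0"
    by auto
  have "degree P \<le> CARD('a)"
    unfolding P_def using card_UNIV_field_ge_2[where 'a='a]
    by (intro degree_diff_le) (auto simp: degree_monom_le)
  have roots: "poly P w = 0 \<longleftrightarrow> w ^ CARD('a) = w" for w
    by (simp add: P_def poly_monom)
  have "range to_ac \<subseteq> {w. poly P w = (0 :: 'a alg_closure)}"
    by (auto simp: roots power_card_UNIV_eq_self simp flip: to_ac_power)
  moreover have "card {w. poly P w = 0} \<le> card (range (to_ac :: 'a \<Rightarrow> _))"
    using card_poly_roots_bound[OF \<open>P \<noteq> 0\<close>] \<open>degree P \<le> CARD('a)\<close>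
      card_image[OF inj_to_ac[where 'a='a]]
    by simp
  ultimately have "range to_ac = {w. poly P w = (0 :: 'a alg_closure)}"
    using poly_roots_finite[OF \<open>P \<noteq> 0\<close>] by (intro card_seteq) simp_all
  with assms show ?thesis
    by (simp add: roots)
qed

definition common_root :: "'a::field poly \<Rightarrow> 'a poly \<Rightarrow> bool" where
  "common_root p q \<longleftrightarrow> (\<exists>z. poly (map_poly to_ac p) z = 0 \<and> poly (map_poly to_ac q) z = 0)"

lemma common_root_commute: "common_root p q \<longleftrightarrow> common_root q p"
  by (auto simp: common_root_def)

lemma coprime_iff_not_common_root:
  fixes A B :: "'a::field poly"
  assumes "A \<noteq> 0"
  shows "coprime A B \<longleftrightarrow> \<not> common_root A B"
proof
  assume "coprime A B"
  then obtain u v where "u * A + v * B = 1"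
    using coprime_imp_bezout assms by blast
  then have "map_poly to_ac u * map_poly to_ac A + map_poly to_ac v * map_poly to_ac B = 1"
    by (metis to_ac.map_poly_add to_ac.map_poly_mult map_poly_1' to_ac_1)
  then show "\<not> common_root A B"
    unfolding common_root_def
    by (metis add.right_neutral mult_zero_right poly_1 poly_add poly_mult zero_neq_one)
next
  assume no_root: "\<not> common_root A B"
  show "coprime A B"
  proof (rule coprimeI)
    fix C
    assume C: "C dvd A" "C dvd B"
    show "is_unit C"
    proof (rule ccontr)
      assume "\<not> is_unit C"
      with assms C have "degree (map_poly to_ac C) > 0"
        by (auto simp: is_unit_iff_degree)
      then obtain z where "poly (map_poly to_ac C) z = 0"
        using alg_closed_imp_poly_has_root by blast
      with C have "common_root A B"
        unfolding common_root_def by (auto elim!: dvdE simp: to_ac.map_poly_mult)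
      with no_root show False ..
    qed
  qed
qed

section \<open>Scaling the roots\<close>

lemma pcompose_linear_inverse:
  fixes p :: "'a::field poly"
  assumes "c \<noteq> 0"
  shows "pcompose (pcompose p [:0, c:]) [:0, inverse c:] = p"
  using assms by (simp add: pcompose_assoc[symmetric] pcompose_pCons)

lemma is_unit_pcompose_linear_iff:
  fixes p :: "'a::field poly"
  assumes "c \<noteq> 0"
  shows "is_unit (pcompose p [:0, c:]) \<longleftrightarrow> is_unit p"
  using assms
  by (cases "p = 0") (simp_all add: is_unit_iff_degree degree_pcompose pcompose_eq_0_iff)

lemma irreducible_pcompose_linear:
  fixes f :: "'a::field poly"
  assumes "c \<noteq> 0" "irreducible f"
  shows "irreducible (pcompose f [:0, c:])"
proof (rule irreducibleI)
  show "pcompose f [:0, c:] \<noteq> 0"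
    using assms by (simp add: pcompose_eq_0_iff irreducible_def)
  show "\<not> is_unit (pcompose f [:0, c:])"
    using assms by (simp add: is_unit_pcompose_linear_iff irreducible_not_unit)
next
  fix a b
  assume "pcompose f [:0, c:] = a * b"
  then have "f = pcompose a [:0, inverse c:] * pcompose b [:0, inverse c:]"
    using pcompose_linear_inverse[OF assms(1), of f] by (simp add: pcompose_mult)
  then have "is_unit (pcompose a [:0, inverse c:]) \<or> is_unit (pcompose b [:0, inverse c:])"
    by (rule irreducibleD[OF assms(2)])
  then show "is_unit a \<or> is_unit b"
    using assms(1) by (simp add: is_unit_pcompose_linear_iff)
qed

definition scale_roots :: "'a::field \<Rightarrow> 'a poly \<Rightarrow> 'a poly" where
  "scale_roots l f = smult (l ^ degree f) (pcompose f [:0, inverse l:])"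

lemma degree_scale_roots: "l \<noteq> 0 \<Longrightarrow> degree (scale_roots l f) = degree f"
  by (simp add: scale_roots_def degree_pcompose)

lemma lead_coeff_scale_roots:
  assumes "l \<noteq> 0"
  shows "lead_coeff (scale_roots l f) = lead_coeff f"
proof -
  have "lead_coeff (pcompose f [:0, inverse l:]) = lead_coeff f * inverse l ^ degree f"
    using assms lead_coeff_comp[of "[:0, inverse l:]" f] by simp
  then show ?thesis
    unfolding scale_roots_def lead_coeff_smult
    using assms by (simp add: power_mult_distrib[symmetric])
qed

lemma scale_roots_inverse:
  assumes "l \<noteq> 0"
  shows "scale_roots (inverse l) (scale_roots l f) = f"
  using assms pcompose_linear_inverse[of "inverse l" f]
  by (simp add: scale_roots_def degree_scale_roots degree_pcompose pcompose_smult
      power_mult_distrib[symmetric])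

lemma irreducible_scale_roots:
  assumes "l \<noteq> 0" "irreducible f"
  shows "irreducible (scale_roots l f)"
proof -
  have "is_unit [:l ^ degree f:]"
    using assms(1) by (simp add: is_unit_const_poly_iff dvd_field_iff)
  moreover have "irreducible (pcompose f [:0, inverse l:])"
    using assms by (simp add: irreducible_pcompose_linear)
  ultimately show ?thesis
    using irreducible_mult_unit_left[of "[:l ^ degree f:]" "pcompose f [:0, inverse l:]"]
    by (simp add: scale_roots_def)
qed

lemma scale_roots_prod_linear:
  fixes xs :: "'a::field list"
  assumes "l \<noteq> 0"
  shows "scale_roots l (\<Prod>x\<leftarrow>xs. [:-x, 1:]) = (\<Prod>x\<leftarrow>xs. [:-(l * x), 1:])"
proof -
  have "smult (l ^ length xs) (pcompose (\<Prod>x\<leftarrow>xs. [:-x, 1:]) [:0, inverse l:]) =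
      (\<Prod>x\<leftarrow>xs. [:-(l * x), 1:])"
  proof (induction xs)
    case (Cons x xs)
    have lin: "smult l (pcompose [:-x, 1:] [:0, inverse l:]) = [:-(l * x), 1:]"
      using assms by (simp add: pcompose_pCons)
    have "smult (l ^ length (x # xs)) (pcompose (\<Prod>y\<leftarrow>x # xs. [:-y, 1:]) [:0, inverse l:]) =
        smult l (pcompose [:-x, 1:] [:0, inverse l:]) *
        smult (l ^ length xs) (pcompose (\<Prod>y\<leftarrow>xs. [:-y, 1:]) [:0, inverse l:])"
      by (simp add: pcompose_mult mult.commute del: mult_pCons_left)
    then show ?case
      unfolding lin Cons.IH by simp
  qed (simp add: pcompose_1)
  then show ?thesis
    by (simp add: scale_roots_def monic_prod_linear)
qed

lemma scale_roots_mem_monic_polys: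
  assumes "l \<noteq> 0" "f \<in> monic_polys m"
  shows "scale_roots l f \<in> monic_polys m"
  using assms lead_coeff_scale_roots[OF assms(1), of f] degree_scale_roots[OF assms(1), of f]
  unfolding monic_polys_def by (metis (mono_tags) mem_Collect_eq)

lemma map_poly_to_ac_scale_roots:
  "map_poly to_ac (scale_roots l f) = scale_roots (to_ac l) (map_poly to_ac f)"
  by (simp add: scale_roots_def map_poly_smult to_ac.map_poly_pcompose map_poly_pCons)

section \<open>Characteristic two\<close>

definition even_odd_poly :: "'a::comm_ring_1 poly \<Rightarrow> 'a poly \<Rightarrow> 'a poly" where
  "even_odd_poly A B = A ^ 2 + [:0, 1:] * B ^ 2"

lemma common_root_even_odd_poly: "common_root (even_odd_poly A B) (B ^ 2) \<longleftrightarrow> common_root A B"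
proof -
  have "poly (map_poly to_ac (even_odd_poly A B)) z =
      poly (map_poly to_ac A) z ^ 2 + z * poly (map_poly to_ac B) z ^ 2"
    and "poly (map_poly to_ac (B ^ 2)) z = poly (map_poly to_ac B) z ^ 2" for z
    by (simp_all add: even_odd_poly_def to_ac.map_poly_add to_ac.map_poly_mult to_ac.map_poly_power
        map_poly_pCons)
  then have "poly (map_poly to_ac (even_odd_poly A B)) z = 0 \<and> poly (map_poly to_ac (B ^ 2)) z = 0 \<longleftrightarrow>
      poly (map_poly to_ac A) z = 0 \<and> poly (map_poly to_ac B) z = 0" for z
    by auto
  then show ?thesis
    unfolding common_root_def by blast
qed

lemma even_odd_poly_mem_monic_polys:
  fixes A B :: "'a::idom poly"
  shows "A \<in> monic_polys k \<Longrightarrow> B \<in> polys_deg_less k \<Longrightarrow> even_odd_poly A B \<in> monic_polys (2 * k)"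
    and "B \<in> monic_polys k \<Longrightarrow> A \<in> polys_deg_less (Suc k) \<Longrightarrow>
      even_odd_poly A B \<in> monic_polys (Suc (2 * k))"
proof -
  show "even_odd_poly A B \<in> monic_polys (2 * k)" if "A \<in> monic_polys k" "B \<in> polys_deg_less k"
    unfolding even_odd_poly_def using that
    by (intro add_mem_monic_polys power2_mem_monic_polys)
      (auto simp: polys_deg_less_iff degree_mult_eq degree_power_eq)
  show "even_odd_poly A B \<in> monic_polys (Suc (2 * k))"
    if "B \<in> monic_polys k" "A \<in> polys_deg_less (Suc k)"
  proof -
    have "[:0, 1:] * B ^ 2 \<in> monic_polys (Suc (2 * k))"
      using mult_mem_monic_polys_iff[of "[:0, 1 :: 'a:]" "B ^ 2" "2 * k"]
        power2_mem_monic_polys[OF that(1)]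
      by simp
    moreover have "A ^ 2 \<in> polys_deg_less (Suc (2 * k))"
      using that(2) by (cases "A = 0") (auto simp: polys_deg_less_iff degree_power_eq)
    ultimately have "[:0, 1:] * B ^ 2 + A ^ 2 \<in> monic_polys (Suc (2 * k))"
      by (rule add_mem_monic_polys)
    then show ?thesis
      by (simp add: even_odd_poly_def add.commute)
  qed
qed

text \<open>For degree 2k the even part is the monic component of the pair, for degree 2k + 1 the odd
  one.\<close>

definition even_odd_join :: "nat \<Rightarrow> 'a::comm_ring_1 poly \<times> 'a poly \<Rightarrow> 'a poly" where
  "even_odd_join c = (\<lambda>(P, Q). if c = 0 then even_odd_poly P Q else even_odd_poly Q P)"

lemma even_odd_join_mem_monic_polys:
  fixes x :: "'a::field poly \<times> 'a poly"
  assumes "c \<le> 1" "x \<in> poly_pairs c k"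
  shows "even_odd_join c x \<in> monic_polys (2 * k + c)"
proof (cases "c = 0")
  case True
  with assms(2) show ?thesis
    by (auto simp: even_odd_join_def poly_pairs_def intro: even_odd_poly_mem_monic_polys(1))
next
  case False
  with assms have "c = 1"
    by simp
  with assms(2) show ?thesis
    by (auto simp: even_odd_join_def poly_pairs_def intro: even_odd_poly_mem_monic_polys(2))
qed

context
  assumes CHAR_2: "CHAR('a::field) = 2"
begin

lemma pderiv_even_odd_poly: "pderiv (even_odd_poly A B) = (B ^ 2 :: 'a poly)"
proof -
  have "of_nat 2 = (0::'a)"
    using CHAR_2 of_nat_CHAR[where 'a='a] by simp
  then have "pderiv (p ^ 2) = 0" for p :: "'a poly"
    using pderiv_power_Suc[of p 1] by (simp add: numeral_2_eq_2)
  then show ?thesis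
    by (simp add: even_odd_poly_def pderiv_add pderiv_mult pderiv_pCons)
qed

lemma even_odd_poly_inj:
  fixes A B C D :: "'a poly"
  assumes "even_odd_poly A B = even_odd_poly C D"
  shows "A = C \<and> B = D"
proof -
  have char_poly: "CHAR('a poly) = 2"
    by (simp add: CHAR_2)
  then have square_add: "(p + q) ^ 2 = p ^ 2 + q ^ 2" for p q :: "'a poly"
    by (intro freshmans_dream) simp_all
  have add_self: "p + p = 0" for p :: "'a poly"
    using minus_CHAR_2[OF char_poly, of p p] by simp
  have "(A + C) ^ 2 + [:0, 1:] * (B + D) ^ 2 = even_odd_poly A B + even_odd_poly C D"
    by (simp add: square_add even_odd_poly_def algebra_simps)
  also have "\<dots> = 0"
    using assms add_self by simp
  finally have eq: "(A + C) ^ 2 = [:0, 1:] * (B + D) ^ 2"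
    by (simp add: add_eq_0_iff2 uminus_CHAR_2[OF char_poly])
  have "B + D = 0"
  proof (rule ccontr)
    assume "B + D \<noteq> 0"
    then have "odd (degree ((A + C) ^ 2))"
      unfolding eq by (simp add: degree_mult_eq degree_power_eq)
    moreover have "A + C \<noteq> 0"
      using eq \<open>B + D \<noteq> 0\<close> by auto
    ultimately show False
      by (simp add: degree_power_eq)
  qed
  with eq have "A + C = 0"
    by simp
  with \<open>B + D = 0\<close> show ?thesis
    by (simp add: add_eq_0_iff2 uminus_CHAR_2[OF char_poly])
qed

lemma common_root_pderiv_even_odd_join:
  assumes "x \<in> poly_pairs c k"
  shows "common_root (even_odd_join c x) (pderiv (even_odd_join c x)) \<longleftrightarrow>
    x \<notin> (coprime_poly_pairs c k :: ('a poly \<times> 'a poly) set)"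
proof -
  obtain P Q where x: "x = (P, Q)" "P \<in> monic_polys k"
    using assms by (auto simp: poly_pairs_def)
  have "common_root (even_odd_join c x) (pderiv (even_odd_join c x)) \<longleftrightarrow> common_root P Q"
    using common_root_commute[of Q P]
    by (simp add: even_odd_join_def x pderiv_even_odd_poly common_root_even_odd_poly)
  also have "\<dots> \<longleftrightarrow> \<not> coprime P Q"
    using coprime_iff_not_common_root[OF monic_polys_nonzero[OF x(2)], of Q] by simp
  finally show ?thesis
    using assms by (simp add: x coprime_poly_pairs_def)
qed

lemma inj_even_odd_join: "inj (even_odd_join c :: 'a poly \<times> 'a poly \<Rightarrow> 'a poly)"
proof (rule injI)
  fix x y :: "'a poly \<times> 'a poly"
  assume "even_odd_join c x = even_odd_join c y"
  moreover obtain P Q P' Q' where "x = (P, Q)" "y = (P', Q')"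
    by (cases x, cases y)
  ultimately show "x = y"
    by (cases "c = 0") (auto simp: even_odd_join_def dest: even_odd_poly_inj)
qed

end

lemma even_odd_join_image:
  assumes "CHAR('a::{finite,field}) = 2" "c \<le> 1"
  shows "even_odd_join c ` (poly_pairs c k :: ('a poly \<times> 'a poly) set) = monic_polys (2 * k + c)"
proof (rule card_subset_eq[OF card_monic_polys(1)])
  show "even_odd_join c ` poly_pairs c k \<subseteq> (monic_polys (2 * k + c) :: 'a poly set)"
    using even_odd_join_mem_monic_polys[OF assms(2)] by blast
  let ?pairs = "poly_pairs c k :: ('a poly \<times> 'a poly) set"
  show "card (even_odd_join c ` ?pairs) = card (monic_polys (2 * k + c) :: 'a poly set)"
  proof -
    have "card (even_odd_join c ` ?pairs) = card ?pairs"
      using inj_even_odd_join[OF assms(1)] by (rule card_image[OF inj_on_subset]) simp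
    then show ?thesis
      by (simp add: card_poly_pairs card_monic_polys)
  qed
qed

lemma card_monic_common_root_pderiv:
  assumes CHAR_2: "CHAR('a::{finite,field}) = 2" and "m \<ge> 2"
  shows "card {f :: 'a poly. f \<in> monic_polys m \<and> common_root f (pderiv f)} = CARD('a) ^ (m - 1)"
proof -
  define c k where "c = m mod 2" and "k = m div 2"
  then have m: "m = 2 * k + c" "c \<le> 1"
    by simp_all
  with \<open>m \<ge> 2\<close> obtain k' where k': "k = Suc k'"
    using not0_implies_Suc by fastforce
  let ?pairs = "poly_pairs c k :: ('a poly \<times> 'a poly) set"
  have image: "even_odd_join c ` ?pairs = monic_polys m"
    unfolding m by (rule even_odd_join_image[OF CHAR_2 m(2)])
  have "{f. f \<in> monic_polys m \<and> common_root f (pderiv f)} =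
      even_odd_join c ` (?pairs - coprime_poly_pairs c k)"
  proof (intro equalityI subsetI)
    fix f :: "'a poly"
    assume f: "f \<in> {f. f \<in> monic_polys m \<and> common_root f (pderiv f)}"
    then obtain x where "x \<in> ?pairs" "f = even_odd_join c x"
      using image by blast
    with f show "f \<in> even_odd_join c ` (?pairs - coprime_poly_pairs c k)"
      using common_root_pderiv_even_odd_join[OF CHAR_2] by blast
  next
    fix f :: "'a poly"
    assume "f \<in> even_odd_join c ` (?pairs - coprime_poly_pairs c k)"
    then show "f \<in> {f. f \<in> monic_polys m \<and> common_root f (pderiv f)}"
      using image common_root_pderiv_even_odd_join[OF CHAR_2] by blast
  qed
  also have "card \<dots> = card (?pairs - coprime_poly_pairs c k)"
    using inj_even_odd_join[OF CHAR_2] by (rule card_image[OF inj_on_subset]) simp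
  also have "\<dots> = CARD('a) ^ (m - 1)"
    using card_not_coprime_poly_pairs[of c k'] m k' by simp
  finally show ?thesis .
qed

section \<open>Discriminants over finite fields\<close>

context
  fixes n :: nat
  assumes card_eq_CHAR_power: "CARD('a::{finite,field}) = CHAR('a) ^ n"
begin

lemma idom_hom_power_card: "idom_hom (\<lambda>z::'a alg_closure. z ^ CARD('a))"
  using frobenius_idom_hom[where 'a="'a alg_closure", of n] prime_CHAR_finite_field[where 'a='a]
    card_eq_CHAR_power by simp

lemma mset_map_power_card_disc_roots:
  fixes f :: "'a poly"
  assumes "lead_coeff f = 1"
  shows "mset (map (\<lambda>z. z ^ CARD('a)) (disc_roots f)) = mset (disc_roots f)"
proof -
  interpret frob: idom_hom "\<lambda>z::'a alg_closure. z ^ CARD('a)"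
    by (rule idom_hom_power_card)
  have "map_poly (\<lambda>z. z ^ CARD('a)) (map_poly to_ac f) = map_poly to_ac f"
    by (rule poly_eqI)
      (simp add: coeff_map_poly frob.hom_zero power_card_UNIV_eq_self flip: to_ac_power)
  then have "(\<Prod>x\<leftarrow>map (\<lambda>z. z ^ CARD('a)) (disc_roots f). [:-x, 1:]) =
      (\<Prod>x\<leftarrow>disc_roots f. [:-x, 1:])"
    unfolding map_poly_to_ac_eq_prod_disc_roots[OF assms]
    by (simp add: frob.map_poly_prod_list map_poly_pCons frob.hom_uminus frob.hom_zero frob.hom_one
        o_def)
  then show ?thesis
    by (metis proots_prod_linear)
qed

lemma to_ac_disc:
  fixes f :: "'a poly"
  assumes "lead_coeff f = 1" "degree f \<noteq> 1"
  shows "to_ac (disc f) = root_disc (disc_roots f)"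
proof -
  interpret frob: idom_hom "\<lambda>z::'a alg_closure. z ^ CARD('a)"
    by (rule idom_hom_power_card)
  have "root_disc (disc_roots f) ^ CARD('a) = root_disc (disc_roots f)"
    using root_disc_mset_eq[OF mset_map_power_card_disc_roots[OF assms(1)]]
    by (simp add: frob.hom_root_disc)
  \<comment> \<open>Only on this range does of_ac, used in the definition of disc, invert to_ac.\<close>
  then have "root_disc (disc_roots f) \<in> range to_ac"
    by (rule fixed_by_power_card_in_range_to_ac)
  then show ?thesis
    using disc_eq_of_ac_root_disc[OF assms] by (simp add: to_ac_of_ac)
qed

lemma disc_eq_0_iff_common_root:
  fixes f :: "'a poly"
  assumes "lead_coeff f = 1" "degree f \<noteq> 1"
  shows "disc f = 0 \<longleftrightarrow> common_root f (pderiv f)"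
proof -
  have "disc f = 0 \<longleftrightarrow> \<not> distinct (disc_roots f)"
    using to_ac_disc[OF assms] root_disc_eq_0_iff by (metis to_ac_eq_0_iff)
  also have "\<dots> \<longleftrightarrow> common_root f (pderiv f)"
    unfolding common_root_def to_ac.map_poly_pderiv map_poly_to_ac_eq_prod_disc_roots[OF assms(1)]
    by (rule not_distinct_iff_common_root_pderiv)
  finally show ?thesis .
qed

lemma disc_scale_roots:
  fixes f :: "'a poly"
  assumes "l \<noteq> 0" "lead_coeff f = 1" "degree f \<noteq> 1"
  shows "disc (scale_roots l f) = l ^ (degree f * (degree f - 1)) * disc f"
proof -
  let ?g = "scale_roots l f"
  have g: "lead_coeff ?g = 1" "degree ?g \<noteq> 1"
    using assms lead_coeff_scale_roots[of l f] degree_scale_roots[of l f] by simp_all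
  have "(\<Prod>x\<leftarrow>disc_roots ?g. [:-x, 1:]) = (\<Prod>x\<leftarrow>map ((*) (to_ac l)) (disc_roots f). [:-x, 1:])"
    using assms(1) map_poly_to_ac_scale_roots[of l f]
    by (simp add: map_poly_to_ac_eq_prod_disc_roots[OF g(1)]
        map_poly_to_ac_eq_prod_disc_roots[OF assms(2)] scale_roots_prod_linear o_def)
  then have "mset (disc_roots ?g) = mset (map ((*) (to_ac l)) (disc_roots f))"
    by (metis proots_prod_linear)
  then have "to_ac (disc ?g) = to_ac l ^ (degree f * (degree f - 1)) * to_ac (disc f)"
    using to_ac_disc[OF g] to_ac_disc[OF assms(2,3)] root_disc_mset_eq root_disc_map_mult
      length_disc_roots[OF assms(2)] by metis
  then show ?thesis
    by (metis to_ac_eq_iff to_ac_mult to_ac_power)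
qed

lemma bij_betw_scale_roots_disc:
  fixes P :: "'a poly \<Rightarrow> bool"
  assumes "l \<noteq> 0" "m \<noteq> 1" and P_scale: "\<And>l f. l \<noteq> 0 \<Longrightarrow> P f \<Longrightarrow> P (scale_roots l f)"
  shows "bij_betw (scale_roots l) {f \<in> monic_polys m. P f \<and> disc f = d}
    {f \<in> monic_polys m. P f \<and> disc f = l ^ (m * (m - 1)) * d}"
proof (rule bij_betw_byWitness[where f' = "scale_roots (inverse l)"])
  have scale_mem: "scale_roots l' f \<in> monic_polys m \<and> P (scale_roots l' f) \<and>
      disc (scale_roots l' f) = l' ^ (m * (m - 1)) * disc f"
    if "l' \<noteq> 0" "f \<in> monic_polys m" "P f" for l' :: 'a and f :: "'a poly"
    using that assms(2) P_scale disc_scale_roots[of l' f] scale_roots_mem_monic_polys[of l' f m]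
    by (auto simp: monic_polys_def)
  show "scale_roots l ` {f \<in> monic_polys m. P f \<and> disc f = d} \<subseteq>
      {f \<in> monic_polys m. P f \<and> disc f = l ^ (m * (m - 1)) * d}"
    using scale_mem[OF assms(1)] by auto
  show "scale_roots (inverse l) ` {f \<in> monic_polys m. P f \<and> disc f = l ^ (m * (m - 1)) * d} \<subseteq>
      {f \<in> monic_polys m. P f \<and> disc f = d}"
    using scale_mem[of "inverse l"] assms(1) by (auto simp: power_inverse)
  show "\<forall>f\<in>{f \<in> monic_polys m. P f \<and> disc f = d}. scale_roots (inverse l) (scale_roots l f) = f"
    using assms(1) by (simp add: scale_roots_inverse)
  show "\<forall>f\<in>{f \<in> monic_polys m. P f \<and> disc f = l ^ (m * (m - 1)) * d}.
      scale_roots l (scale_roots (inverse l) f) = f"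
    using scale_roots_inverse[of "inverse l"] assms(1) by simp
qed

lemma card_disc_fiber_eq_fiber_1:
  fixes P :: "'a poly \<Rightarrow> bool"
  assumes "coprime (CARD('a) - 1) (m * (m - 1))" "m \<noteq> 1" "d \<noteq> 0"
    and "\<And>l f. l \<noteq> 0 \<Longrightarrow> P f \<Longrightarrow> P (scale_roots l f)"
  shows "card {f \<in> monic_polys m. P f \<and> disc f = d} = card {f \<in> monic_polys m. P f \<and> disc f = 1}"
proof -
  obtain l where "l \<noteq> 0" "l ^ (m * (m - 1)) = d"
    using ex_power_eq_if_coprime assms(1,3) by blast
  then show ?thesis
    using bij_betw_scale_roots_disc[of l m P 1] assms(2,4) by (simp add: bij_betw_same_card)
qed

end

lemma sum_card_disc_fibers:
  "(\<Sum>d\<in>UNIV. card {f \<in> monic_polys m :: 'a::{finite,field} poly set. disc f = d}) = CARD('a) ^ m"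
proof -
  have "(\<Sum>d\<in>UNIV. card {f \<in> monic_polys m :: 'a poly set. disc f = d}) =
      1 * card (monic_polys m :: 'a poly set)"
    by (rule sum_multicount[of "UNIV :: 'a set" "monic_polys m" "\<lambda>d f. disc f = d"])
      (simp_all add: card_monic_polys)
  then show ?thesis
    by (simp add: card_monic_polys)
qed

lemma card_disc_fiber_0_char_2:
  assumes "CARD('a::{finite,field}) = 2 ^ k" "m \<ge> 2"
  shows "card {f \<in> monic_polys m :: 'a poly set. disc f = 0} = CARD('a) ^ (m - 1)"
proof -
  have CHAR_2: "CHAR('a) = 2"
    using assms(1) by (rule CHAR_eq_2_if_card_eq_power_2)
  then have card_CHAR: "CARD('a) = CHAR('a) ^ k"
    using assms(1) by simp
  have "disc f = 0 \<longleftrightarrow> common_root f (pderiv f)" if "f \<in> monic_polys m" for f :: "'a poly"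
  proof -
    from that have "lead_coeff f = 1" "degree f = m"
      unfolding monic_polys_def by blast+
    with assms(2) show ?thesis
      using disc_eq_0_iff_common_root[OF card_CHAR \<open>lead_coeff f = 1\<close>] by simp
  qed
  then have "{f \<in> monic_polys m :: 'a poly set. disc f = 0} =
      {f. f \<in> monic_polys m \<and> common_root f (pderiv f)}"
    by auto
  then show ?thesis
    using card_monic_common_root_pderiv[OF CHAR_2 assms(2)] by simp
qed

lemma card_disc_fiber_char_2:
  fixes d :: "'a::{finite,field}"
  assumes "CARD('a) = 2 ^ k" "m \<ge> 2" "coprime (CARD('a) - 1) (m * (m - 1))"
  shows "card {f \<in> monic_polys m :: 'a poly set. disc f = d} = CARD('a) ^ (m - 1)"
proof -
  let ?q = "CARD('a)" and ?S = "\<lambda>d. {f \<in> monic_polys m :: 'a poly set. disc f = d}"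
  have card_CHAR: "?q = CHAR('a) ^ k"
    using assms(1) by (simp add: CHAR_eq_2_if_card_eq_power_2)
  have zero: "card (?S 0) = ?q ^ (m - 1)"
    using assms(1,2) by (rule card_disc_fiber_0_char_2)
  have nonzero: "card (?S d) = card (?S 1)" if "d \<noteq> 0" for d
    using card_disc_fiber_eq_fiber_1[OF card_CHAR assms(3) _ that, where P = "\<lambda>_. True"] assms(2)
    by simp
  have "?q ^ m = (\<Sum>d\<in>UNIV. card (?S d))"
    by (rule sum_card_disc_fibers[symmetric])
  also have "\<dots> = card (?S 0) + (\<Sum>d\<in>UNIV - {0}. card (?S d))"
    by (rule sum.remove) simp_all
  also have "(\<Sum>d\<in>UNIV - {0}. card (?S d)) = (\<Sum>d\<in>UNIV - {0::'a}. card (?S 1))"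
    by (rule sum.cong[OF refl], rule nonzero) simp
  also have "\<dots> = (?q - 1) * card (?S 1)"
    by (simp add: card_Diff_singleton)
  finally have "?q ^ m = ?q ^ (m - 1) + (?q - 1) * card (?S 1)"
    by (simp only: zero)
  moreover obtain m' where "m = Suc m'"
    using assms(2) by (cases m) auto
  moreover obtain q' where q': "?q = Suc (Suc q')"
    using card_UNIV_field_ge_2[where 'a='a] by (metis add_2_eq_Suc le_Suc_ex)
  ultimately have "(?q - 1) * card (?S 1) = (?q - 1) * ?q ^ (m - 1)"
    by simp
  then have "card (?S 1) = ?q ^ (m - 1)"
    by (rule mult_left_cancel[THEN iffD1, rotated]) (simp add: q')
  then show ?thesis
    using zero nonzero[of d] by (cases "d = 0") simp_all
qed

theorem theorem1p2:
  fixes m :: nat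
  assumes q2: "\<exists>k. card (UNIV :: 'a set) = 2 ^ k"
    and m: "m \<ge> 2"
    and cop: "gcd (card (UNIV :: 'a set) - 1) (m * (m - 1)) = 1"
  shows "(\<forall>d::'a::{finite,field}. card {f :: 'a poly. lead_coeff f = 1 \<and> degree f = m \<and> disc f = d}
                 = card (UNIV :: 'a set) ^ (m - 1))
       \<and> (\<exists>N. \<forall>d::'a::{finite,field}. d \<noteq> 0 \<longrightarrow>
             card {f :: 'a poly. lead_coeff f = 1 \<and> degree f = m \<and> irreducible f \<and> disc f = d} = N)"
proof -
  obtain k where card_2: "CARD('a) = 2 ^ k"
    using q2 by blast
  then have card_CHAR: "CARD('a) = CHAR('a) ^ k"
    by (simp add: CHAR_eq_2_if_card_eq_power_2)
  have coprime: "coprime (CARD('a) - 1) (m * (m - 1))"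
    using cop by (simp add: coprime_iff_gcd_eq_1)
  have monic: "{f. lead_coeff f = 1 \<and> degree f = m \<and> P f} = {f \<in> monic_polys m. P f}"
    for P :: "'a poly \<Rightarrow> bool"
    by (auto simp: monic_polys_def)
  have "card {f :: 'a poly. lead_coeff f = 1 \<and> degree f = m \<and> disc f = d} = CARD('a) ^ (m - 1)"
    for d :: 'a
    using card_disc_fiber_char_2[OF card_2 m coprime] monic[of "\<lambda>f. disc f = d"] by simp
  moreover have "card {f :: 'a poly. lead_coeff f = 1 \<and> degree f = m \<and> irreducible f \<and> disc f = d} =
      card {f :: 'a poly. lead_coeff f = 1 \<and> degree f = m \<and> irreducible f \<and> disc f = 1}"
    if "d \<noteq> 0" for d :: 'a
    using card_disc_fiber_eq_fiber_1[where P = irreducible,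
        OF card_CHAR coprime _ that irreducible_scale_roots] m monic
    by simp
  ultimately show ?thesis
    by blast
qed

end
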